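(* Let $G$ be a group with a finite-index normal subgroup $A\cong\mathbb{Z}^2$. Suppose there is $g\in G$ such that the automorphism $a\mapsto g^{-1}ag$ of $A$ is neither the identity map nor the inversion map. Then $G$ has quadratic automorphic growth.
   Context: For a finitely generated group $G$ with finite generating set $\Sigma$, the automorphic growth function sends $n$ to the number of $\operatorname{Aut}(G)$-orbits of $G$ containing an element of word length at most $n$. Quadratic means it is $\sim$-equivalent to $n\mapsto n^2$, where $f\sim g$ iff $f\preccurlyeq g$ and $g\preccurlyeq f$, and $f\preccurlyeq g$ means there is $\lambda\in\mathbb{N}\setminus\{0\}$ with $f(n)\le\lambda g(\lambda n+\lambda)+\lambda$ for all $n$ (this is independent of $\Sigma$). *)

theory Defs
  imports "HOL-Algebra.Algebra"
begin

definition word_ball :: "('a, 'b) monoid_scheme \<Rightarrow> 'a set \<Rightarrow> nat \<Rightarrow> 'a set" where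
  "word_ball G S n =
     {foldr (\<lambda>x y. x \<otimes>\<^bsub>G\<^esub> y) xs \<one>\<^bsub>G\<^esub> | xs.
        length xs \<le> n \<and> set xs \<subseteq> S \<union> (\<lambda>s. inv\<^bsub>G\<^esub> s) ` S}"

definition aut_orbit :: "('a, 'b) monoid_scheme \<Rightarrow> 'a \<Rightarrow> 'a set" where
  "aut_orbit G x = (\<lambda>f. f x) ` iso G G"

definition aut_growth :: "('a, 'b) monoid_scheme \<Rightarrow> 'a set \<Rightarrow> nat \<Rightarrow> nat" where
  "aut_growth G S n = card (aut_orbit G ` word_ball G S n)"

definition growth_le :: "(nat \<Rightarrow> nat) \<Rightarrow> (nat \<Rightarrow> nat) \<Rightarrow> bool" where
  "growth_le f g \<longleftrightarrow> (\<exists>c::nat. c \<noteq> 0 \<and> (\<forall>n. f n \<le> c * g (c * n + c) + c))"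

definition growth_equiv :: "(nat \<Rightarrow> nat) \<Rightarrow> (nat \<Rightarrow> nat) \<Rightarrow> bool" where
  "growth_equiv f g \<longleftrightarrow> growth_le f g \<and> growth_le g f"

definition finite_generating_set :: "('a, 'b) monoid_scheme \<Rightarrow> 'a set \<Rightarrow> bool" where
  "finite_generating_set G S \<longleftrightarrow> finite S \<and> S \<subseteq> carrier G \<and> generate G S = carrier G"

definition quadratic_aut_growth :: "('a, 'b) monoid_scheme \<Rightarrow> bool" where
  "quadratic_aut_growth G \<longleftrightarrow>
     (\<exists>S. finite_generating_set G S) \<and>
     (\<forall>S. finite_generating_set G S \<longrightarrow> growth_equiv (aut_growth G S) (\<lambda>n. n ^ 2))"

end

(* Upper bound: G is the union of finitely many cosets A t, and a word of length n in the
   generators lands in a coset A t at an element of A whose coordinates are O(n), so the word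
   ball of radius n has O(n^2) elements.
   Lower bound: G acts on A = Z^2 by conjugation through integer matrices of finite order; that
   of g is not +-1, hence it is elliptic or a reflection, and its area form det(w, M w) is a
   definite or a split binary quadratic form, so it takes each nonzero value only finitely often.
   An automorphism f gives the integer matrix L of a |-> f(a^N), N the index of A, which
   intertwines the matrices of g and f g and has a nonzero determinant of absolute value at
   most N^4; by the area form argument only finitely many such L exist, and L determines f on
   A.  Hence every Aut(G)-orbit meets A in a bounded number of elements, while the (2n+1)^2
   elements of A with coordinates at most n all have word length O(n). *)
theory Submission
  imports Defs "HOL-Library.Product_Plus"
begin

(* HOL-Algebra declares the order rules of its ring of integers as transitivity rules; they
   would capture every calculation on int. *)
declare int.le_trans[trans del] int.lless_trans[trans del] int.le_cong_l[trans del]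
  int.le_cong_r[trans del] int.lless_cong_l[trans del] int.lless_cong_r[trans del]

section \<open>Integer 2-by-2 matrices\<close>

type_synonym mat2 = "int \<times> int \<times> int \<times> int"

fun mat_apply :: "mat2 \<Rightarrow> int \<times> int \<Rightarrow> int \<times> int" where
  "mat_apply (a, b, c, d) (x, y) = (a * x + b * y, c * x + d * y)"

fun det2 :: "mat2 \<Rightarrow> int" where
  "det2 (a, b, c, d) = a * d - b * c"

fun trace2 :: "mat2 \<Rightarrow> int" where
  "trace2 (a, b, c, d) = a + d"

definition scalar_mat :: "mat2 \<Rightarrow> bool" where
  "scalar_mat M \<longleftrightarrow> (\<exists>l. M = (l, 0, 0, l))"

definition mat_of :: "(int \<times> int \<Rightarrow> int \<times> int) \<Rightarrow> mat2" where
  "mat_of f = (fst (f (1, 0)), fst (f (0, 1)), snd (f (1, 0)), snd (f (0, 1)))"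

definition intertwines :: "mat2 \<Rightarrow> mat2 \<Rightarrow> mat2 \<Rightarrow> bool" where
  "intertwines L M M' \<longleftrightarrow> (\<forall>v. mat_apply L (mat_apply M v) = mat_apply M' (mat_apply L v))"

text \<open>As a binary quadratic form in \<open>w\<close>, the area form has discriminant
  \<open>trace2 M ^ 2 - 4 * det2 M\<close>.\<close>
definition area_form :: "mat2 \<Rightarrow> int \<times> int \<Rightarrow> int" where
  "area_form M w = fst w * snd (mat_apply M w) - snd w * fst (mat_apply M w)"

definition elliptic_or_reflection :: "mat2 \<Rightarrow> bool" where
  "elliptic_or_reflection M \<longleftrightarrow>
     trace2 M ^ 2 < 4 * det2 M \<or> (det2 M = -1 \<and> trace2 M = 0)"

definition int_box :: "int \<Rightarrow> (int \<times> int) set" where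
  "int_box B = {-B..B} \<times> {-B..B}"

lemma mem_int_box: "v \<in> int_box B \<longleftrightarrow> \<bar>fst v\<bar> \<le> B \<and> \<bar>snd v\<bar> \<le> B"
  by (cases v) (auto simp: int_box_def abs_le_iff)

lemma finite_int_box [simp]: "finite (int_box B)"
  by (simp add: int_box_def)

lemma card_int_box: "card (int_box (int m)) = (2 * m + 1) ^ 2"
proof -
  have "card {- int m..int m} = 2 * m + 1" by simp
  then show ?thesis unfolding int_box_def card_cartesian_product by (simp add: power2_eq_square)
qed

lemma int_box_mono: "B \<le> C \<Longrightarrow> int_box B \<subseteq> int_box C"
  by (auto simp: mem_int_box)

lemma add_mem_int_box: "v \<in> int_box B \<Longrightarrow> w \<in> int_box C \<Longrightarrow> v + w \<in> int_box (B + C)"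
  by (auto simp: mem_int_box abs_triangle_ineq order.trans[OF abs_triangle_ineq add_mono])

lemma finite_subset_int_box:
  assumes "finite Y"
  obtains m :: nat where "Y \<subseteq> int_box (int m)"
proof -
  have "finite ((\<lambda>v. nat \<bar>fst v\<bar> + nat \<bar>snd v\<bar>) ` Y)" using assms by simp
  then obtain m where "\<forall>k \<in> (\<lambda>v. nat \<bar>fst v\<bar> + nat \<bar>snd v\<bar>) ` Y. k \<le> m"
    using finite_nat_set_iff_bounded_le by blast
  then have "Y \<subseteq> int_box (int m)" by (fastforce simp: mem_int_box)
  then show ?thesis by (rule that)
qed

lemma mat_apply_eq: "mat_apply (a, b, c, d) w = (a * fst w + b * snd w, c * fst w + d * snd w)"
  by (cases w) simp

lemma additive_int_to_pair:
  fixes h :: "int \<Rightarrow> int \<times> int"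
  assumes "additive h"
  shows "h k = (k * fst (h 1), k * snd (h 1))"
proof (induction k rule: int_induct[where k = 0])
  case base
  show ?case using additive.zero[OF assms] by (simp add: zero_prod_def)
next
  case (step1 i)
  have "h (i + 1) = h i + h 1" by (rule additive.add[OF assms])
  with step1 show ?case by (cases "h 1") (simp add: algebra_simps)
next
  case (step2 i)
  have "h (i - 1) = h i - h 1" by (rule additive.diff[OF assms])
  with step2 show ?case by (cases "h 1") (simp add: algebra_simps)
qed

lemma mat_apply_mat_of:
  assumes "additive f"
  shows "mat_apply (mat_of f) v = f v"
proof -
  obtain x y where v: "v = (x, y)" by fastforce
  have "additive (\<lambda>x. f (x, 0))" "additive (\<lambda>y. f (0, y))"
    by (unfold_locales; metis additive.add[OF assms] add_Pair add_0)+
  moreover have "f v = f (x, 0) + f (0, y)"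
    using additive.add[OF assms, of "(x, 0)" "(0, y)"] v by simp
  ultimately show ?thesis
    using additive_int_to_pair[of "\<lambda>x. f (x, 0)" x] additive_int_to_pair[of "\<lambda>y. f (0, y)" y]
    unfolding mat_of_def v by (simp add: algebra_simps)
qed

lemma inj_mat_apply:
  assumes "det2 L \<noteq> 0"
  shows "inj (mat_apply L)"
proof (rule injI)
  fix v w assume eq: "mat_apply L v = mat_apply L w"
  obtain a b c d where L: "L = (a, b, c, d)" by (cases L) auto
  obtain x y x' y' where vw: "v = (x, y)" "w = (x', y')" by fastforce
  have r1: "a * x + b * y = a * x' + b * y'" and r2: "c * x + d * y = c * x' + d * y'"
    using eq unfolding L vw by simp_all
  have "det2 L * (x - x')
      = d * ((a * x + b * y) - (a * x' + b * y')) - b * ((c * x + d * y) - (c * x' + d * y'))"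
    unfolding L by (simp add: algebra_simps)
  also have "\<dots> = 0" unfolding r1 r2 by simp
  finally have "x = x'" using assms by simp
  have "det2 L * (y - y')
      = a * ((c * x + d * y) - (c * x' + d * y')) - c * ((a * x + b * y) - (a * x' + b * y'))"
    unfolding L by (simp add: algebra_simps)
  also have "\<dots> = 0" unfolding r1 r2 by simp
  finally have "y = y'" using assms by simp
  with \<open>x = x'\<close> show "v = w" unfolding vw by simp
qed

lemma finite_mat_apply_preimage:
  assumes "det2 L \<noteq> 0" "finite F"
  shows "finite {w. mat_apply L w \<in> F}"
  using finite_vimageI[OF assms(2) inj_mat_apply[OF assms(1)]] by (simp add: vimage_def)

lemma mat_eq_if_eq_on_independent:
  assumes "fst u * snd v - snd u * fst v \<noteq> 0"
    and "mat_apply L u = mat_apply L' u" "mat_apply L v = mat_apply L' v"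
  shows "L = L'"
proof -
  obtain l1 l2 l3 l4 where L: "L = (l1, l2, l3, l4)" by (cases L) auto
  obtain m1 m2 m3 m4 where L': "L' = (m1, m2, m3, m4)" by (cases L') auto
  define P where "P = (fst u, snd u, fst v, snd v)"
  \<comment> \<open>the rows of a matrix are recovered from its values at \<open>u\<close> and \<open>v\<close>
    by the invertible \<open>P\<close>\<close>
  have "mat_apply P (l1, l2) = mat_apply P (m1, m2)" "mat_apply P (l3, l4) = mat_apply P (m3, m4)"
    using assms(2,3) unfolding P_def L L' by (cases u, cases v, auto simp: algebra_simps)+
  moreover have "inj (mat_apply P)" using assms(1) unfolding P_def
    by (intro inj_mat_apply) (cases u, cases v, simp)
  ultimately show ?thesis unfolding L L' by (auto dest: injD)
qed

lemma det2_mult_if_comp_scalar: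
  assumes "\<And>v. mat_apply B (mat_apply C v) = (k * fst v, k * snd v)"
  shows "det2 B * det2 C = k * k"
proof -
  obtain l1 l2 l3 l4 where B: "B = (l1, l2, l3, l4)" by (cases B) auto
  obtain a b c d where C: "C = (a, b, c, d)" by (cases C) auto
  have "l1 * a + l2 * c = k" "l3 * a + l4 * c = 0" "l1 * b + l2 * d = 0" "l3 * b + l4 * d = k"
    using assms[of "(1, 0)"] assms[of "(0, 1)"] unfolding B C by auto
  moreover have "det2 B * det2 C
      = (l1 * a + l2 * c) * (l3 * b + l4 * d) - (l1 * b + l2 * d) * (l3 * a + l4 * c)"
    unfolding B C by (simp add: algebra_simps)
  ultimately show ?thesis by simp
qed

lemma intertwines_trace_det:
  assumes "intertwines L M M'" "det2 L \<noteq> 0"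
  shows "trace2 M' = trace2 M" "det2 M' = det2 M"
proof -
  obtain l1 l2 l3 l4 where L: "L = (l1, l2, l3, l4)" by (cases L) auto
  obtain a b c d where M: "M = (a, b, c, d)" by (cases M) auto
  obtain a' b' c' d' where M': "M' = (a', b', c', d')" by (cases M') auto
  have "mat_apply L (mat_apply M (1, 0)) = mat_apply M' (mat_apply L (1, 0))"
       "mat_apply L (mat_apply M (0, 1)) = mat_apply M' (mat_apply L (0, 1))"
    using assms(1) unfolding intertwines_def by blast+
  then have E: "l1 * a + l2 * c = a' * l1 + b' * l3" "l3 * a + l4 * c = c' * l1 + d' * l3"
          "l1 * b + l2 * d = a' * l2 + b' * l4" "l3 * b + l4 * d = c' * l2 + d' * l4"
    unfolding L M M' by (auto simp: algebra_simps)
  have "det2 L * trace2 M = l4 * (l1 * a + l2 * c) - l2 * (l3 * a + l4 * c)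
                            - l3 * (l1 * b + l2 * d) + l1 * (l3 * b + l4 * d)"
       "det2 L * trace2 M' = l4 * (a' * l1 + b' * l3) - l2 * (c' * l1 + d' * l3)
                            - l3 * (a' * l2 + b' * l4) + l1 * (c' * l2 + d' * l4)"
       "det2 L * det2 M = (l1 * a + l2 * c) * (l3 * b + l4 * d)
                            - (l1 * b + l2 * d) * (l3 * a + l4 * c)"
       "det2 L * det2 M' = (a' * l1 + b' * l3) * (c' * l2 + d' * l4)
                            - (a' * l2 + b' * l4) * (c' * l1 + d' * l3)"
    unfolding L M M' by (simp_all add: algebra_simps)
  then have "det2 L * trace2 M' = det2 L * trace2 M" "det2 L * det2 M' = det2 L * det2 M"
    unfolding E by simp_all
  then show "trace2 M' = trace2 M" "det2 M' = det2 M" using assms(2) by simp_all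
qed

lemma intertwinesD:
  "intertwines L M M' \<Longrightarrow> mat_apply L (mat_apply M v) = mat_apply M' (mat_apply L v)"
  unfolding intertwines_def by blast

lemma elliptic_or_reflection_intertwines:
  assumes "intertwines L M M'" "det2 L \<noteq> 0" "elliptic_or_reflection M"
  shows "elliptic_or_reflection M'"
  using assms intertwines_trace_det[OF assms(1,2)] by (simp add: elliptic_or_reflection_def)

lemma area_form_intertwines:
  assumes "intertwines L M M'"
  shows "area_form M' (mat_apply L u) = det2 L * area_form M u"
proof -
  have "area_form M' (mat_apply L u)
      = fst (mat_apply L u) * snd (mat_apply L (mat_apply M u))
        - snd (mat_apply L u) * fst (mat_apply L (mat_apply M u))"
    using intertwinesD[OF assms] unfolding area_form_def by simp
  also have "\<dots> = det2 L * area_form M u" unfolding area_form_def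
    by (cases L, cases M, cases u) (simp add: algebra_simps)
  finally show ?thesis .
qed

lemma area_form_nonzero_if_not_scalar:
  assumes "\<not> scalar_mat M"
  shows "\<exists>u. area_form M u \<noteq> 0"
proof -
  obtain a b c d where M: "M = (a, b, c, d)" by (cases M) auto
  have "area_form M (1, 0) = c" "area_form M (0, 1) = - b" "area_form M (1, 1) = c + d - a - b"
    unfolding area_form_def M by simp_all
  moreover have "c \<noteq> 0 \<or> b \<noteq> 0 \<or> a \<noteq> d" using assms unfolding scalar_mat_def M by auto
  ultimately have "area_form M (1, 0) \<noteq> 0 \<or> area_form M (0, 1) \<noteq> 0 \<or> area_form M (1, 1) \<noteq> 0"
    by auto
  then show ?thesis by blast
qed

lemma abs_le_if_abs_mult_le:
  fixes x y K :: int
  assumes "x * y \<noteq> 0" "\<bar>x * y\<bar> \<le> K"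
  shows "\<bar>x\<bar> \<le> K"
proof -
  have "\<bar>x\<bar> * 1 \<le> \<bar>x\<bar> * \<bar>y\<bar>" using assms(1) by (intro mult_left_mono) auto
  with assms(2) show ?thesis by (simp add: abs_mult)
qed

lemma abs_le_square: "\<bar>z :: int\<bar> \<le> z ^ 2"
  using abs_le_if_abs_mult_le[of z z "z * z"] by (cases "z = 0") (auto simp: power2_eq_square)

lemma finite_small_values_factored:
  fixes Q :: "int \<times> int \<Rightarrow> int"
  assumes "det2 L \<noteq> 0" "k \<noteq> 0"
    and "\<And>w. k * Q w = fst (mat_apply L w) * snd (mat_apply L w)"
  shows "finite {w. Q w \<noteq> 0 \<and> \<bar>Q w\<bar> \<le> K}"
proof -
  have "{w. Q w \<noteq> 0 \<and> \<bar>Q w\<bar> \<le> K} \<subseteq> {w. mat_apply L w \<in> int_box (\<bar>k\<bar> * K)}"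
  proof safe
    fix w assume w: "Q w \<noteq> 0" "\<bar>Q w\<bar> \<le> K"
    define p q where "p = fst (mat_apply L w)" and "q = snd (mat_apply L w)"
    have pq: "p * q = k * Q w" unfolding p_def q_def assms(3) ..
    then have "p * q \<noteq> 0" using w(1) assms(2) by simp
    moreover have "\<bar>p * q\<bar> \<le> \<bar>k\<bar> * K" unfolding pq abs_mult using w(2) by (simp add: mult_left_mono)
    ultimately show "mat_apply L w \<in> int_box (\<bar>k\<bar> * K)"
      unfolding mem_int_box p_def[symmetric] q_def[symmetric]
      using abs_le_if_abs_mult_le[of p q] abs_le_if_abs_mult_le[of q p] by (simp add: mult.commute)
  qed
  then show ?thesis using finite_mat_apply_preimage[OF assms(1) finite_int_box]
    by (rule finite_subset)
qed

lemma finite_small_values_definite: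
  fixes Q :: "int \<times> int \<Rightarrow> int"
  assumes "det2 L \<noteq> 0" "E > 0"
    and "\<And>w. k * Q w = fst (mat_apply L w) ^ 2 + E * snd (mat_apply L w) ^ 2"
  shows "finite {w. \<bar>Q w\<bar> \<le> K}"
proof -
  have "{w. \<bar>Q w\<bar> \<le> K} \<subseteq> {w. mat_apply L w \<in> int_box (\<bar>k\<bar> * K)}"
  proof safe
    fix w assume w: "\<bar>Q w\<bar> \<le> K"
    define p q where "p = fst (mat_apply L w)" and "q = snd (mat_apply L w)"
    have "p ^ 2 + E * q ^ 2 = k * Q w" unfolding p_def q_def assms(3) ..
    also have "\<dots> \<le> \<bar>k\<bar> * \<bar>Q w\<bar>" by (simp add: abs_mult[symmetric])
    also have "\<dots> \<le> \<bar>k\<bar> * K" using w by (simp add: mult_left_mono)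
    finally have "p ^ 2 + E * q ^ 2 \<le> \<bar>k\<bar> * K" .
    moreover have "q ^ 2 \<le> E * q ^ 2" using assms(2) mult_right_mono[of 1 E "q ^ 2"] by simp
    moreover have "0 \<le> p ^ 2" "0 \<le> q ^ 2" by simp_all
    ultimately have "p ^ 2 \<le> \<bar>k\<bar> * K" "q ^ 2 \<le> \<bar>k\<bar> * K" by linarith+
    then show "mat_apply L w \<in> int_box (\<bar>k\<bar> * K)"
      unfolding mem_int_box p_def[symmetric] q_def[symmetric]
        using abs_le_square[of p] abs_le_square[of q] by linarith
  qed
  then show ?thesis using finite_mat_apply_preimage[OF assms(1) finite_int_box]
    by (rule finite_subset)
qed

lemma finite_small_area_values:
  assumes "elliptic_or_reflection M"
  shows "finite {w. area_form M w \<noteq> 0 \<and> \<bar>area_form M w\<bar> \<le> K}"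
proof -
  obtain a b c d where M: "M = (a, b, c, d)" by (cases M) auto
  have Q: "area_form M w = c * fst w ^ 2 + (d - a) * fst w * snd w - b * snd w ^ 2" for w
    unfolding area_form_def M mat_apply_eq by (simp add: power2_eq_square algebra_simps)
  consider (elliptic) "(a + d) ^ 2 < 4 * (a * d - b * c)"
    | (reflection) "a * d - b * c = -1" "a + d = 0"
    using assms unfolding elliptic_or_reflection_def M by auto
  then show ?thesis
  proof cases
    case elliptic
    have "c \<noteq> 0"
    proof
      assume "c = 0"
      with elliptic have "(a - d) ^ 2 < 0" by (simp add: power2_eq_square algebra_simps)
      then show False by simp
    qed
    have "finite {w. \<bar>area_form M w\<bar> \<le> K}"
    proof (rule finite_small_values_definite)
      show "det2 (2 * c, d - a, 0, 1) \<noteq> 0" using \<open>c \<noteq> 0\<close> by simp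
      show "4 * (a * d - b * c) - (a + d) ^ 2 > 0" using elliptic by simp
      \<comment> \<open>completing the square\<close>
      show "4 * c * area_form M w
          = fst (mat_apply (2 * c, d - a, 0, 1) w) ^ 2
            + (4 * (a * d - b * c) - (a + d) ^ 2) * snd (mat_apply (2 * c, d - a, 0, 1) w) ^ 2"
        for w
        unfolding Q mat_apply_eq by (simp add: power2_eq_square algebra_simps)
    qed
    then show ?thesis by (rule finite_subset[rotated]) auto
  next
    case reflection
    then have d: "d = - a" by simp
    with reflection(1) have abc: "a * a + b * c = 1" by simp
    show ?thesis
    proof (cases "c = 0")
      case True
      with abc have "a = 1 \<or> a = -1" by (simp add: zmult_eq_1_iff)
      show ?thesis
      proof (rule finite_small_values_factored)
        show "det2 (0, -1, 2 * a, b) \<noteq> 0" using \<open>a = 1 \<or> a = -1\<close> by auto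
        show "1 * area_form M w
            = fst (mat_apply (0, -1, 2 * a, b) w) * snd (mat_apply (0, -1, 2 * a, b) w)" for w
          unfolding Q mat_apply_eq True d by (simp add: power2_eq_square algebra_simps)
      qed simp
    next
      case False
      have "c * area_form M w = (c * fst w + (- a - 1) * snd w) * (c * fst w + (1 - a) * snd w)"
        for w
      proof -
        have "c * area_form M w - (c * fst w + (- a - 1) * snd w) * (c * fst w + (1 - a) * snd w)
            = (1 - (a * a + b * c)) * snd w ^ 2"
          unfolding Q d by (simp add: power2_eq_square algebra_simps)
        then show ?thesis using abc by simp
      qed
      then show ?thesis
        by (intro finite_small_values_factored[where L = "(c, - a - 1, c, 1 - a)" and k = c])
           (use False in \<open>simp_all add: mat_apply_eq algebra_simps\<close>)
    qed
  qed
qed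

lemma int_eq_one_if_power_eq_one:
  fixes l :: int
  assumes "l ^ n = 1" "n > 0"
  shows "l = 1 \<or> l = -1"
proof -
  have "\<bar>l\<bar> ^ n = 1 ^ n" using assms(1) by (simp add: power_abs[symmetric])
  then have "\<bar>l\<bar> = 1" using power_eq_imp_eq_base[of "\<bar>l\<bar>" n 1] assms(2) by simp
  then show ?thesis by auto
qed

lemma abs_add_eq_if_mult_nonneg:
  fixes x y :: "'a :: linordered_idom"
  assumes "0 \<le> x * y"
  shows "\<bar>x + y\<bar> = \<bar>x\<bar> + \<bar>y\<bar>"
  using assms by (auto simp: zero_le_mult_iff abs_if)

fun lucas_U :: "int \<Rightarrow> int \<Rightarrow> nat \<Rightarrow> int" where
  "lucas_U P Q 0 = 0"
| "lucas_U P Q (Suc 0) = 1"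
| "lucas_U P Q (Suc (Suc n)) = P * lucas_U P Q (Suc n) - Q * lucas_U P Q n"

lemma funpow_mat_apply_lucas_U:
  fixes M :: mat2
  defines "U \<equiv> lucas_U (trace2 M) (det2 M)"
  shows "(mat_apply M ^^ Suc n) v =
           (U (Suc n) * fst (mat_apply M v) - det2 M * U n * fst v,
            U (Suc n) * snd (mat_apply M v) - det2 M * U n * snd v)"
proof (induction n)
  case 0
  show ?case by (cases "mat_apply M v") (simp add: U_def)
next
  case (Suc n)
  have "(mat_apply M ^^ Suc (Suc n)) v = mat_apply M ((mat_apply M ^^ Suc n) v)" by simp
  also note Suc.IH
  finally show ?case by (cases M, cases v) (simp add: U_def algebra_simps)
qed

lemma lucas_U_abs_strict_mono:
  assumes "\<bar>P\<bar> \<ge> 2"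
  shows "\<bar>lucas_U P 1 n\<bar> < \<bar>lucas_U P 1 (Suc n)\<bar>"
proof (induction n)
  case 0
  show ?case by simp
next
  case (Suc n)
  have "2 * \<bar>lucas_U P 1 (Suc n)\<bar> \<le> \<bar>P * lucas_U P 1 (Suc n)\<bar>"
    using assms by (simp add: abs_mult mult_right_mono)
  with Suc.IH show ?case by simp
qed

lemma lucas_U_minus_one_nonzero:
  assumes "P \<noteq> 0"
  shows "lucas_U P (-1) (Suc n) \<noteq> 0"
proof -
  let ?U = "lucas_U P (-1)"
  \<comment> \<open>\<open>P * ?U (Suc n)\<close> and \<open>?U n\<close> never have opposite signs, so the recurrence
    \<open>?U (Suc (Suc n)) = P * ?U (Suc n) + ?U n\<close> involves no cancellation\<close>
  have "\<bar>?U n\<bar> \<le> \<bar>?U (Suc n)\<bar> \<and> ?U (Suc n) \<noteq> 0 \<and> 0 \<le> P * ?U (Suc n) * ?U n" for n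
  proof (induction n)
    case 0
    show ?case by simp
  next
    case (Suc n)
    have rec: "?U (Suc (Suc n)) = P * ?U (Suc n) + ?U n" by simp
    have "\<bar>?U (Suc n)\<bar> \<le> \<bar>P * ?U (Suc n)\<bar>"
      using assms mult_right_mono[of 1 "\<bar>P\<bar>" "\<bar>?U (Suc n)\<bar>"] by (simp add: abs_mult)
    also have "\<dots> \<le> \<bar>P * ?U (Suc n)\<bar> + \<bar>?U n\<bar>" by simp
    also have "\<dots> = \<bar>?U (Suc (Suc n))\<bar>"
      unfolding rec using Suc.IH by (intro abs_add_eq_if_mult_nonneg[symmetric]) simp
    finally have "\<bar>?U (Suc n)\<bar> \<le> \<bar>?U (Suc (Suc n))\<bar>" .
    moreover from this have "?U (Suc (Suc n)) \<noteq> 0" using Suc.IH by auto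
    moreover have "P * ?U (Suc (Suc n)) * ?U (Suc n) = (P * ?U (Suc n)) ^ 2 + P * ?U (Suc n) * ?U n"
      unfolding rec by (simp add: power2_eq_square algebra_simps)
    then have "0 \<le> P * ?U (Suc (Suc n)) * ?U (Suc n)" using Suc.IH by simp
    ultimately show ?case by blast
  qed
  then show ?thesis by blast
qed

lemma finite_order_elliptic_or_reflection:
  assumes "mat_apply M ^^ N = id" "N > 0" "\<not> scalar_mat M"
  shows "elliptic_or_reflection M"
proof -
  obtain a b c d where M: "M = (a, b, c, d)" by (cases M) auto
  obtain k where N: "N = Suc k" using assms(2) gr0_implies_Suc by blast
  define t e where "t = trace2 M" and "e = det2 M"
  define p q where "p = lucas_U t e N" and "q = e * lucas_U t e k"
  have "(mat_apply M ^^ Suc k) (1, 0) = (1, 0)" "(mat_apply M ^^ Suc k) (0, 1) = (0, 1)"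
    using assms(1) unfolding N by simp_all
  then have "(p * a - q, p * c) = (1, 0)" "(p * b, p * d - q) = (0, 1)"
    unfolding funpow_mat_apply_lucas_U N p_def q_def t_def e_def M by simp_all
  then have pq: "p * c = 0" "p * b = 0" "p * a - q = 1" "p * d - q = 1" by simp_all
  have "p = 0"
  proof (rule ccontr)
    assume "p \<noteq> 0"
    moreover from pq have "p * a = p * d" by linarith
    ultimately have "c = 0" "b = 0" "a = d" using pq by simp_all
    with assms(3) show False unfolding M scalar_mat_def by simp
  qed
  with pq have "e * lucas_U t e k = -1" unfolding p_def q_def by simp
  then have "e = 1 \<or> e = -1" using zmult_eq_neg1_iff by blast
  then show ?thesis
  proof
    assume e: "e = 1"
    have "\<bar>t\<bar> < 2"
      using lucas_U_abs_strict_mono[of t k] \<open>p = 0\<close> unfolding p_def q_def N e by fastforce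
    then have "t \<in> {-1, 0, 1}" by auto
    then have "t ^ 2 < 4" by auto
    then show ?thesis using e unfolding elliptic_or_reflection_def t_def e_def by simp
  next
    assume e: "e = -1"
    have "t = 0" using lucas_U_minus_one_nonzero[of t k] \<open>p = 0\<close> unfolding p_def q_def N e by blast
    then show ?thesis using e unfolding elliptic_or_reflection_def t_def e_def by simp
  qed
qed

lemma finite_intertwiners:
  assumes "finite H" "elliptic_or_reflection M" "\<not> scalar_mat M"
  shows "finite {L. \<exists>M'\<in>H. intertwines L M M' \<and> det2 L \<noteq> 0 \<and> \<bar>det2 L\<bar> \<le> K}"
    (is "finite ?LL")
proof -
  obtain u where u: "area_form M u \<noteq> 0" using area_form_nonzero_if_not_scalar[OF assms(3)] by blast
  define W where "W M' = {w. area_form M' w \<noteq> 0 \<and> \<bar>area_form M' w\<bar> \<le> \<bar>K * area_form M u\<bar>}" for M'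
  define graphs where
    "graphs = (\<Union>M' \<in> {M' \<in> H. elliptic_or_reflection M'}. (\<lambda>w. (w, mat_apply M' w)) ` W M')"
  define evals where "evals L = (mat_apply L u, mat_apply L (mat_apply M u))" for L
  \<comment> \<open>an intertwiner is determined by its values on the independent vectors \<open>u\<close> and \<open>M u\<close>,
    and the first of them is a small value of the area form of \<open>M'\<close>\<close>
  have "inj evals"
  proof (rule injI)
    fix L L' assume "evals L = evals L'"
    then show "L = L'"
      using u
        by (intro mat_eq_if_eq_on_independent[of u "mat_apply M u"])
           (auto simp: evals_def area_form_def)
  qed
  moreover have "evals ` ?LL \<subseteq> graphs"
  proof
    fix z assume "z \<in> evals ` ?LL"
    then obtain L M' where z: "z = evals L"
      and L: "M' \<in> H" "intertwines L M M'" "det2 L \<noteq> 0" "\<bar>det2 L\<bar> \<le> K" by blast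
    have "area_form M' (mat_apply L u) = det2 L * area_form M u"
      by (rule area_form_intertwines[OF L(2)])
    moreover have "\<bar>det2 L * area_form M u\<bar> \<le> \<bar>K * area_form M u\<bar>"
      using L(4) by (simp add: abs_mult mult_right_mono)
    ultimately have "mat_apply L u \<in> W M'" using u L(3) unfolding W_def by simp
    moreover have "evals L = (mat_apply L u, mat_apply M' (mat_apply L u))"
      using intertwinesD[OF L(2)] unfolding evals_def by simp
    moreover have "elliptic_or_reflection M'"
      using elliptic_or_reflection_intertwines[OF L(2,3) assms(2)] .
    ultimately show "z \<in> graphs"
      using L(1) z unfolding graphs_def by blast
  qed
  moreover have "finite graphs"
    using assms(1) finite_small_area_values unfolding graphs_def W_def by auto
  ultimately show ?thesis by (meson finite_imageD finite_subset inj_on_subset subset_UNIV)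
qed

section \<open>Word balls, orbits and conjugation\<close>

lemma card_le_mult_card_image:
  assumes "finite B" "\<And>b. b \<in> B \<Longrightarrow> card {b' \<in> B. f b' = f b} \<le> D"
  shows "card B \<le> D * card (f ` B)"
proof -
  have "B = (\<Union>y \<in> f ` B. {b \<in> B. f b = y})" by auto
  then have "card B \<le> (\<Sum>y \<in> f ` B. card {b \<in> B. f b = y})"
    using card_UN_le[of "f ` B" "\<lambda>y. {b \<in> B. f b = y}"] assms(1) by simp
  also have "\<dots> \<le> (\<Sum>y \<in> f ` B. D)" using assms(2) by (intro sum_mono) auto
  finally show ?thesis by (simp add: mult.commute)
qed

lemma mem_aut_orbit_self: "x \<in> aut_orbit G x"
  unfolding aut_orbit_def using id_iso[of G] by (metis id_apply image_eqI)

context group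
begin

lemma conj_mult_distrib:
  assumes "h \<in> carrier G" "a \<in> carrier G" "b \<in> carrier G"
  shows "inv h \<otimes> (a \<otimes> b) \<otimes> h = (inv h \<otimes> a \<otimes> h) \<otimes> (inv h \<otimes> b \<otimes> h)"
proof -
  have "(inv h \<otimes> a \<otimes> h) \<otimes> (inv h \<otimes> b \<otimes> h) = inv h \<otimes> a \<otimes> (h \<otimes> inv h) \<otimes> b \<otimes> h"
    using assms by (simp only: m_assoc m_closed inv_closed)
  also have "\<dots> = inv h \<otimes> (a \<otimes> b) \<otimes> h" using assms by (simp add: m_assoc)
  finally show ?thesis by simp
qed

lemma conj_mult_conj:
  assumes "h \<in> carrier G" "k \<in> carrier G" "a \<in> carrier G"
  shows "inv (h \<otimes> k) \<otimes> a \<otimes> (h \<otimes> k) = inv k \<otimes> (inv h \<otimes> a \<otimes> h) \<otimes> k"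
  using assms by (simp add: inv_mult_group m_assoc)

lemma conj_eq_if_commute:
  assumes "c \<in> carrier G" "a \<in> carrier G" "a \<otimes> c = c \<otimes> a"
  shows "inv c \<otimes> a \<otimes> c = a"
proof -
  have "inv c \<otimes> a \<otimes> c = inv c \<otimes> (c \<otimes> a)" using assms by (simp add: m_assoc)
  also have "\<dots> = a" using assms by (simp add: m_assoc[symmetric])
  finally show ?thesis .
qed

lemma conj_nat_pow:
  assumes "h \<in> carrier G" "a \<in> carrier G"
  shows "(inv h \<otimes> a \<otimes> h) [^] (n :: nat) = inv h \<otimes> a [^] n \<otimes> h"
proof (induction n)
  case 0
  show ?case using assms by (simp add: m_assoc)
next
  case (Suc n)
  then show ?case using assms by (simp add: conj_mult_distrib)
qed

lemma group_hom_if_iso: "f \<in> iso G G \<Longrightarrow> group_hom G G f"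
  unfolding group_hom_def group_hom_axioms_def iso_def using is_group by auto

lemma foldr_mult_eq:
  assumes "set xs \<subseteq> carrier G" "z \<in> carrier G"
  shows "foldr (\<otimes>) xs z = foldr (\<otimes>) xs \<one> \<otimes> z"
  using assms by (induction xs) (auto simp: m_assoc)

lemma inv_foldr_mult:
  assumes "set xs \<subseteq> carrier G"
  shows "inv (foldr (\<otimes>) xs \<one>) = foldr (\<otimes>) (rev (map (\<lambda>x. inv x) xs)) \<one>"
  using assms
proof (induction xs)
  case (Cons x xs)
  then have "inv (foldr (\<otimes>) (x # xs) \<one>) = inv (foldr (\<otimes>) xs \<one>) \<otimes> inv x"
    by (simp add: inv_mult_group)
  also have "\<dots> = foldr (\<otimes>) (rev (map (\<lambda>y. inv y) xs)) \<one> \<otimes> inv x"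
    using Cons by simp
  also have "\<dots> = foldr (\<otimes>) (rev (map (\<lambda>y. inv y) (x # xs))) \<one>"
  proof -
    have "set (rev (map (\<lambda>y. inv y) xs)) \<subseteq> carrier G" "inv x \<in> carrier G" using Cons.prems by auto
    then show ?thesis by (simp add: foldr_mult_eq[symmetric])
  qed
  finally show ?case .
qed simp

lemma word_ball_mono: "n \<le> m \<Longrightarrow> word_ball G S n \<subseteq> word_ball G S m"
  unfolding word_ball_def by fastforce

lemma finite_word_ball: "finite S \<Longrightarrow> finite (word_ball G S n)"
proof -
  assume "finite S"
  then have "finite {xs. set xs \<subseteq> S \<union> (\<lambda>s. inv s) ` S \<and> length xs \<le> n}"
    by (intro finite_lists_length_le) auto
  moreover have "word_ball G S n
      = (\<lambda>xs. foldr (\<otimes>) xs \<one>) ` {xs. set xs \<subseteq> S \<union> (\<lambda>s. inv s) ` S \<and> length xs \<le> n}"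
    unfolding word_ball_def by blast
  ultimately show ?thesis by simp
qed

lemma one_in_word_ball: "\<one> \<in> word_ball G S n"
  unfolding word_ball_def by (rule CollectI, rule exI[of _ "[]"]) simp

lemma generator_in_word_ball: "S \<subseteq> carrier G \<Longrightarrow> s \<in> S \<Longrightarrow> s \<in> word_ball G S 1"
  unfolding word_ball_def by (rule CollectI, rule exI[of _ "[s]"]) auto

lemma inv_generator_in_word_ball: "S \<subseteq> carrier G \<Longrightarrow> s \<in> S \<Longrightarrow> inv s \<in> word_ball G S 1"
  unfolding word_ball_def by (rule CollectI, rule exI[of _ "[inv s]"]) auto

lemma word_ball_mult:
  assumes "S \<subseteq> carrier G" "x \<in> word_ball G S n" "y \<in> word_ball G S m"
  shows "x \<otimes> y \<in> word_ball G S (n + m)"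
proof -
  obtain xs ys where x: "x = foldr (\<otimes>) xs \<one>" "length xs \<le> n" "set xs \<subseteq> S \<union> (\<lambda>s. inv s) ` S"
    and y: "y = foldr (\<otimes>) ys \<one>" "length ys \<le> m" "set ys \<subseteq> S \<union> (\<lambda>s. inv s) ` S"
    using assms(2,3) unfolding word_ball_def by blast
  have "S \<union> (\<lambda>s. inv s) ` S \<subseteq> carrier G" using assms(1) by auto
  then have "set xs \<subseteq> carrier G" "set ys \<subseteq> carrier G" using x(3) y(3) by auto
  then have "x \<otimes> y = foldr (\<otimes>) (xs @ ys) \<one>"
    unfolding x(1) y(1) by (simp add: foldr_mult_eq[symmetric])
  then show ?thesis unfolding word_ball_def using x y by (intro CollectI exI[of _ "xs @ ys"]) auto
qed

lemma word_ball_inv: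
  assumes "S \<subseteq> carrier G" "x \<in> word_ball G S n"
  shows "inv x \<in> word_ball G S n"
proof -
  obtain xs where x: "x = foldr (\<otimes>) xs \<one>" "length xs \<le> n" "set xs \<subseteq> S \<union> (\<lambda>s. inv s) ` S"
    using assms(2) unfolding word_ball_def by blast
  have "set (rev (map (\<lambda>x. inv x) xs)) \<subseteq> S \<union> (\<lambda>s. inv s) ` S"
    using x(3) assms(1) by (auto simp: subset_iff)
  moreover have "inv x = foldr (\<otimes>) (rev (map (\<lambda>x. inv x) xs)) \<one>"
    using x(1,3) assms(1) inv_foldr_mult[of xs] by auto
  ultimately show ?thesis unfolding word_ball_def using x(2)
    by (intro CollectI exI[of _ "rev (map (\<lambda>x. inv x) xs)"]) auto
qed

lemma generate_subset_word_balls: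
  assumes "S \<subseteq> carrier G" "x \<in> generate G S"
  shows "\<exists>n. x \<in> word_ball G S n"
  using assms(2)
proof (induction rule: generate.induct)
  case one
  show ?case using one_in_word_ball by blast
next
  case (incl h)
  then show ?case using generator_in_word_ball[OF assms(1)] by blast
next
  case (inv h)
  then show ?case using inv_generator_in_word_ball[OF assms(1)] by blast
next
  case (eng h1 h2)
  then show ?case using word_ball_mult[OF assms(1)] by blast
qed

lemma word_ball_int_pow:
  assumes "S \<subseteq> carrier G" "x \<in> word_ball G S n"
  shows "x [^] (k :: int) \<in> word_ball G S (n * nat \<bar>k\<bar>)"
proof -
  have nat_pow: "x [^] (j :: nat) \<in> word_ball G S (n * j)" for j
  proof (induction j)
    case 0
    show ?case by (simp add: one_in_word_ball)
  next
    case (Suc j)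
    have "x [^] j \<otimes> x \<in> word_ball G S (n * j + n)"
      by (rule word_ball_mult[OF assms(1) Suc assms(2)])
    then show ?case by (simp add: add.commute)
  qed
  show ?thesis
  proof (cases "k < 0")
    case True
    then have "x [^] k = inv (x [^] nat \<bar>k\<bar>)" unfolding int_pow_def2 if_P[OF True] by simp
    then show ?thesis using word_ball_inv[OF assms(1) nat_pow[of "nat \<bar>k\<bar>"]] by (simp only:)
  next
    case False
    then have "x [^] k = x [^] nat \<bar>k\<bar>" unfolding int_pow_def2 if_not_P[OF False] by simp
    then show ?thesis using nat_pow[of "nat \<bar>k\<bar>"] by (simp only:)
  qed
qed

lemma finite_index_transversal:
  assumes "subgroup H G" "finite (rcosets H)"
  obtains T where "finite T" "T \<subseteq> carrier G" "\<one> \<in> T"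
    and "\<And>g. g \<in> carrier G \<Longrightarrow> \<exists>h \<in> H. \<exists>t \<in> T. g = h \<otimes> t"
proof -
  define rep where "rep C = (SOME x. x \<in> C)" for C :: "'a set"
  define T where "T = insert \<one> (rep ` (rcosets H))"
  have rep: "rep (H #> g) \<in> H #> g" if "g \<in> carrier G" for g
    unfolding rep_def using rcos_self[OF that assms(1)] by (rule someI)
  have "finite T" "\<one> \<in> T" unfolding T_def using assms(2) by simp_all
  moreover have "T \<subseteq> carrier G"
  proof
    fix t assume "t \<in> T"
    then consider "t = \<one>" | g where "g \<in> carrier G" "t = rep (H #> g)"
      unfolding T_def RCOSETS_def by blast
    then show "t \<in> carrier G"
      using rep r_coset_subset_G[OF subgroup.subset[OF assms(1)]] by cases blast+
  qed
  moreover have "\<exists>h \<in> H. \<exists>t \<in> T. g = h \<otimes> t" if g: "g \<in> carrier G" for g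
  proof -
    have "rep (H #> g) \<in> T" unfolding T_def using g
      by (auto intro: rcosetsI[OF subgroup.subset[OF assms(1)]])
    moreover have "H #> g = H #> rep (H #> g)" using repr_independence[OF rep[OF g] g assms(1)] .
    then have "g \<in> H #> rep (H #> g)" using rcos_self[OF g assms(1)] by simp
    ultimately show ?thesis unfolding r_coset_def by blast
  qed
  ultimately show ?thesis using that by blast
qed

end

section \<open>Groups with a normal subgroup of finite index isomorphic to \<open>\<int> \<times> \<int>\<close>\<close>

locale virtually_Z2 = group G for G (structure) +
  fixes A :: "'a set" and coord :: "'a \<Rightarrow> int \<times> int"
  assumes normal_A: "A \<lhd> G"
    and finite_index: "finite (rcosets A)"
    and coord_iso: "coord \<in> iso (G\<lparr>carrier := A\<rparr>) (integer_group \<times>\<times> integer_group)"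
begin

definition of_coord :: "int \<times> int \<Rightarrow> 'a" where
  "of_coord = inv_into A coord"

definition index :: nat where
  "index = card (rcosets A)"

lemma subgroup_A: "subgroup A G"
  using normal_A normal_imp_subgroup by blast

lemma A_subset_carrier: "A \<subseteq> carrier G"
  using subgroup.subset[OF subgroup_A] .

lemma bij_coord: "bij_betw coord A UNIV"
  using coord_iso unfolding iso_def by simp

lemma coord_mult: "a \<in> A \<Longrightarrow> b \<in> A \<Longrightarrow> coord (a \<otimes> b) = coord a + coord b"
  using coord_iso unfolding iso_def hom_def by (auto simp: mult_DirProd' prod_eq_iff)

lemma of_coord_in_A [simp]: "of_coord v \<in> A"
  unfolding of_coord_def using bij_coord by (simp add: bij_betw_def inv_into_into)

lemma of_coord_closed [simp]: "of_coord v \<in> carrier G"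
  using A_subset_carrier by auto

lemma coord_of_coord [simp]: "coord (of_coord v) = v"
  unfolding of_coord_def using bij_coord by (simp add: bij_betw_def f_inv_into_f)

lemma of_coord_coord [simp]: "a \<in> A \<Longrightarrow> of_coord (coord a) = a"
  unfolding of_coord_def using bij_coord by (simp add: bij_betw_def)

lemma of_coord_eq_iff [simp]: "of_coord v = of_coord w \<longleftrightarrow> v = w"
  by (metis coord_of_coord)

lemma of_coord_add: "of_coord (v + w) = of_coord v \<otimes> of_coord w"
  by (metis coord_of_coord coord_mult of_coord_coord of_coord_in_A subgroup.m_closed[OF subgroup_A])

lemma of_coord_zero [simp]: "of_coord 0 = \<one>"
  using of_coord_add[of 0 0] by (metis add_0 l_cancel_one' of_coord_closed)

lemma of_coord_uminus: "of_coord (- v) = inv (of_coord v)"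
  using of_coord_add[of v "- v"]
    by (metis add.right_inverse of_coord_closed of_coord_zero inv_equality r_inv inv_closed)

lemma A_comm: "a \<in> A \<Longrightarrow> b \<in> A \<Longrightarrow> a \<otimes> b = b \<otimes> a"
  by (metis add.commute of_coord_add of_coord_coord)

lemma of_coord_nat_pow: "of_coord v [^] (n :: nat) = of_coord (int n * fst v, int n * snd v)"
proof (induction n)
  case (Suc n)
  have "of_coord v [^] Suc n = of_coord (int n * fst v, int n * snd v) \<otimes> of_coord v" using Suc
    by simp
  also have "\<dots> = of_coord (int (Suc n) * fst v, int (Suc n) * snd v)"
    by (simp add: of_coord_add[symmetric] algebra_simps prod_eq_iff)
  finally show ?case .
qed (simp add: of_coord_zero[unfolded zero_prod_def])

lemma of_coord_int_pow: "of_coord v [^] (k :: int) = of_coord (k * fst v, k * snd v)"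
proof (cases "k < 0")
  case True
  have "of_coord v [^] k = inv (of_coord v [^] nat (- k))" unfolding int_pow_def2 if_P[OF True]
    by (rule refl)
  also have "\<dots> = of_coord (k * fst v, k * snd v)" using True
    by (simp add: of_coord_nat_pow of_coord_uminus[symmetric])
  finally show ?thesis .
next
  case False
  have "of_coord v [^] k = of_coord v [^] nat k" unfolding int_pow_def2 if_not_P[OF False]
    by (rule refl)
  also have "\<dots> = of_coord (k * fst v, k * snd v)" using False by (simp add: of_coord_nat_pow)
  finally show ?thesis .
qed

lemma of_coord_basis_decomp: "of_coord v = of_coord (1, 0) [^] fst v \<otimes> of_coord (0, 1) [^] snd v"
  by (simp add: of_coord_int_pow of_coord_add[symmetric])

lemma index_pos: "index > 0"
  unfolding index_def using finite_index rcosetsI[OF A_subset_carrier one_closed] card_gt_0_iff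
    by blast

lemma pow_index_in_A:
  assumes "g \<in> carrier G"
  shows "g [^] index \<in> A"
proof -
  interpret quotient: group "G Mod A" using normal.factorgroup_is_group[OF normal_A] .
  have "A #> g \<in> carrier (G Mod A)" using assms
    by (simp add: FactGroup_def rcosetsI A_subset_carrier)
  moreover have "order (G Mod A) = index" unfolding index_def order_def FactGroup_def by simp
  ultimately have "(A #> g) [^]\<^bsub>G Mod A\<^esub> index = A" using quotient.pow_order_eq_1 by simp
  then have "A #> (g [^] index) = A" using normal.FactGroup_pow[OF normal_A assms] by simp
  then show ?thesis using coset_join1 subgroup_A assms by blast
qed

lemma transversal:
  obtains T where "finite T" "T \<subseteq> carrier G" "\<one> \<in> T"
    and "\<And>g. g \<in> carrier G \<Longrightarrow> \<exists>a \<in> A. \<exists>t \<in> T. g = a \<otimes> t"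
  using finite_index_transversal[OF subgroup_A finite_index] by blast

lemma finitely_generated: "\<exists>S. finite_generating_set G S"
proof -
  obtain T where T: "finite T" "T \<subseteq> carrier G" "\<one> \<in> T"
    "\<And>g. g \<in> carrier G \<Longrightarrow> \<exists>a \<in> A. \<exists>t \<in> T. g = a \<otimes> t"
    using transversal by metis
  define S where "S = insert (of_coord (1, 0)) (insert (of_coord (0, 1)) T)"
  have S: "finite S" "S \<subseteq> carrier G" unfolding S_def using T(1,2) by auto
  interpret H: subgroup "generate G S" G using generate_is_subgroup[OF S(2)] .
  have "g \<in> generate G S" if g: "g \<in> carrier G" for g
  proof -
    obtain a t where at: "a \<in> A" "t \<in> T" "g = a \<otimes> t" using T(4)[OF g] by blast
    have "of_coord (1, 0) \<in> generate G S" "of_coord (0, 1) \<in> generate G S" "t \<in> generate G S"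
      unfolding S_def using at(2) by (auto intro: generate.incl)
    moreover have "a = of_coord (1, 0) [^] fst (coord a) \<otimes> of_coord (0, 1) [^] snd (coord a)"
      using of_coord_basis_decomp[of "coord a"] at(1) by simp
    ultimately have "a \<in> generate G S"
      by (metis H.m_closed subgroup_int_pow_closed[OF H.subgroup_axioms])
    then show ?thesis unfolding at(3) using \<open>t \<in> generate G S\<close> by (rule H.m_closed)
  qed
  then have "generate G S = carrier G" using generate_incl[OF S(2)] by blast
  then show ?thesis unfolding finite_generating_set_def using S by blast
qed

lemma word_normal_form:
  assumes "finite S'" "S' \<subseteq> carrier G" "finite T" "T \<subseteq> carrier G"
    and "\<And>g. g \<in> carrier G \<Longrightarrow> \<exists>a \<in> A. \<exists>t \<in> T. g = a \<otimes> t"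
  obtains K :: nat where "\<And>xs t. set xs \<subseteq> S' \<Longrightarrow> t \<in> T \<Longrightarrow>
    \<exists>v t'. t \<otimes> foldr (\<otimes>) xs \<one> = of_coord v \<otimes> t' \<and> t' \<in> T \<and> v \<in> int_box (int (K * length xs))"
proof -
  have "\<exists>v t'. t \<otimes> s = of_coord v \<otimes> t' \<and> t' \<in> T" if ts: "t \<in> T" "s \<in> S'" for t s
  proof -
    have "t \<otimes> s \<in> carrier G" using ts assms(2,4) by blast
    then obtain a t' where "a \<in> A" "t' \<in> T" "t \<otimes> s = a \<otimes> t'" using assms(5) by blast
    then show ?thesis by (intro exI[of _ "coord a"] exI[of _ t']) simp
  qed
  then obtain sv st where step:
    "\<And>t s. t \<in> T \<Longrightarrow> s \<in> S' \<Longrightarrow> t \<otimes> s = of_coord (sv t s) \<otimes> st t s \<and> st t s \<in> T"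
    by metis
  obtain K where K: "case_prod sv ` (T \<times> S') \<subseteq> int_box (int K)"
    using finite_subset_int_box[of "case_prod sv ` (T \<times> S')"] assms(1,3) by blast
  have "\<exists>v t'. t \<otimes> foldr (\<otimes>) xs \<one> = of_coord v \<otimes> t' \<and> t' \<in> T \<and> v \<in> int_box (int (K * length xs))"
    if "set xs \<subseteq> S'" "t \<in> T" for xs t
    using that
  proof (induction xs arbitrary: t)
    case Nil
    then have "t \<otimes> foldr (\<otimes>) [] \<one> = of_coord 0 \<otimes> t" using assms(4) by auto
    then show ?case using Nil(2) by (intro exI[of _ 0] exI[of _ t]) (simp add: mem_int_box)
  next
    case (Cons s xs)
    let ?w = "foldr (\<otimes>) xs \<one>"
    have s: "s \<in> S'" "s \<in> carrier G" and xs: "set xs \<subseteq> S'" "?w \<in> carrier G"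
      using Cons.prems assms(2) by auto
    obtain v t' where IH:
      "st t s \<otimes> ?w = of_coord v \<otimes> t'" "t' \<in> T" "v \<in> int_box (int (K * length xs))"
      using Cons.IH[OF xs(1)] step[OF Cons.prems(2) s(1)] by blast
    have "sv t s \<in> int_box (int K)" using K Cons.prems(2) s(1) by blast
    then have "sv t s + v \<in> int_box (int K + int (K * length xs))" using IH(3)
      by (rule add_mem_int_box)
    then have "sv t s + v \<in> int_box (int (K * length (s # xs)))" by (simp add: algebra_simps)
    moreover have "t \<otimes> foldr (\<otimes>) (s # xs) \<one> = of_coord (sv t s + v) \<otimes> t'"
    proof -
      have "t \<otimes> foldr (\<otimes>) (s # xs) \<one> = (t \<otimes> s) \<otimes> ?w"
        using Cons.prems(2) assms(4) s xs by (auto simp: m_assoc)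
      also have "\<dots> = of_coord (sv t s) \<otimes> (st t s \<otimes> ?w)"
        using step[OF Cons.prems(2) s(1)] assms(4) xs by (auto simp: m_assoc)
      also have "\<dots> = of_coord (sv t s + v) \<otimes> t'"
        using IH(1,2) assms(4) by (auto simp: m_assoc of_coord_add)
      finally show ?thesis .
    qed
    ultimately show ?case using IH(2) by blast
  qed
  then show ?thesis using that by blast
qed

lemma aut_growth_upper:
  assumes "finite_generating_set G S"
  shows "growth_le (aut_growth G S) (\<lambda>n. n ^ 2)"
proof -
  have S: "finite S" "S \<subseteq> carrier G" using assms unfolding finite_generating_set_def by auto
  obtain T where T: "finite T" "T \<subseteq> carrier G" "\<one> \<in> T"
    "\<And>g. g \<in> carrier G \<Longrightarrow> \<exists>a \<in> A. \<exists>t \<in> T. g = a \<otimes> t"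
    using transversal by metis
  define S' where "S' = S \<union> (\<lambda>s. inv s) ` S"
  have S': "finite S'" "S' \<subseteq> carrier G" unfolding S'_def using S by auto
  obtain K where K: "\<And>xs t. set xs \<subseteq> S' \<Longrightarrow> t \<in> T \<Longrightarrow>
    \<exists>v t'. t \<otimes> foldr (\<otimes>) xs \<one> = of_coord v \<otimes> t' \<and> t' \<in> T \<and> v \<in> int_box (int (K * length xs))"
    using word_normal_form[OF S' T(1,2) T(4)] by blast
  have ball: "word_ball G S n \<subseteq> (\<lambda>(v, t). of_coord v \<otimes> t) ` (int_box (int (K * n)) \<times> T)" for n
  proof
    fix w assume "w \<in> word_ball G S n"
    then obtain xs where xs: "w = foldr (\<otimes>) xs \<one>" "length xs \<le> n" "set xs \<subseteq> S'"
      unfolding word_ball_def S'_def by blast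
    obtain v t where vt: "\<one> \<otimes> w = of_coord v \<otimes> t" "t \<in> T" "v \<in> int_box (int (K * length xs))"
      using K[OF xs(3) T(3)] xs(1) by blast
    have "w \<in> carrier G" using xs(1,3) S'(2) by auto
    moreover have "int_box (int (K * length xs)) \<subseteq> int_box (int (K * n))"
      using xs(2) by (intro int_box_mono) (simp add: mult_left_mono)
    ultimately show "w \<in> (\<lambda>(v, t). of_coord v \<otimes> t) ` (int_box (int (K * n)) \<times> T)"
      using vt by force
  qed
  define c where "c = 2 * K + 1 + card T"
  have "aut_growth G S n \<le> c * (c * n + c) ^ 2 + c" for n
  proof -
    have "aut_growth G S n \<le> card (word_ball G S n)"
      unfolding aut_growth_def using finite_word_ball[OF S(1)] by (rule card_image_le)
    also have "\<dots> \<le> card ((\<lambda>(v, t). of_coord v \<otimes> t) ` (int_box (int (K * n)) \<times> T))"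
      by (rule card_mono[OF _ ball]) (simp add: T(1))
    also have "\<dots> \<le> card (int_box (int (K * n)) \<times> T)"
      by (rule card_image_le) (simp add: T(1))
    also have "\<dots> = (2 * (K * n) + 1) ^ 2 * card T"
      by (simp only: card_cartesian_product card_int_box)
    also have "\<dots> \<le> (c * n + c) ^ 2 * c"
      unfolding c_def by (intro mult_mono power_mono) (auto simp: algebra_simps)
    also have "\<dots> \<le> c * (c * n + c) ^ 2 + c" by simp
    finally show ?thesis .
  qed
  moreover have "c \<noteq> 0" unfolding c_def by simp
  ultimately show ?thesis unfolding growth_le_def by blast
qed

lemma conj_in_A: "h \<in> carrier G \<Longrightarrow> a \<in> A \<Longrightarrow> inv h \<otimes> a \<otimes> h \<in> A"
  using normal.inv_op_closed1[OF normal_A] by blast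

definition conj_mat :: "'a \<Rightarrow> mat2" where
  "conj_mat h = mat_of (\<lambda>v. coord (inv h \<otimes> of_coord v \<otimes> h))"

lemma conj_of_coord:
  assumes "h \<in> carrier G"
  shows "inv h \<otimes> of_coord v \<otimes> h = of_coord (mat_apply (conj_mat h) v)"
proof -
  have "additive (\<lambda>v. coord (inv h \<otimes> of_coord v \<otimes> h))"
  proof
    fix v w
    have "inv h \<otimes> of_coord (v + w) \<otimes> h = (inv h \<otimes> of_coord v \<otimes> h) \<otimes> (inv h \<otimes> of_coord w \<otimes> h)"
      using assms by (simp add: of_coord_add conj_mult_distrib)
    then show "coord (inv h \<otimes> of_coord (v + w) \<otimes> h)
        = coord (inv h \<otimes> of_coord v \<otimes> h) + coord (inv h \<otimes> of_coord w \<otimes> h)"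
      using assms by (simp add: coord_mult conj_in_A)
  qed
  then show ?thesis
    unfolding conj_mat_def mat_apply_mat_of[OF \<open>additive _\<close>] using assms by (simp add: conj_in_A)
qed

lemma conj_mat_mult:
  assumes "h \<in> carrier G" "k \<in> carrier G"
  shows "mat_apply (conj_mat (h \<otimes> k)) v = mat_apply (conj_mat k) (mat_apply (conj_mat h) v)"
proof -
  have "of_coord (mat_apply (conj_mat (h \<otimes> k)) v) = inv k \<otimes> (inv h \<otimes> of_coord v \<otimes> h) \<otimes> k"
    using assms by (simp add: conj_of_coord[symmetric] conj_mult_conj)
  also have "\<dots> = of_coord (mat_apply (conj_mat k) (mat_apply (conj_mat h) v))"
    using assms by (simp add: conj_of_coord)
  finally show ?thesis by simp
qed

lemma conj_mat_A:
  assumes "c \<in> A"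
  shows "mat_apply (conj_mat c) v = v"
proof -
  have "c \<in> carrier G" using assms A_subset_carrier by blast
  moreover have "inv c \<otimes> of_coord v \<otimes> c = of_coord v"
    using A_comm[OF of_coord_in_A assms] A_subset_carrier assms by (intro conj_eq_if_commute) auto
  ultimately show ?thesis by (simp add: conj_of_coord)
qed

lemma conj_mat_coset:
  assumes "c \<in> A" "t \<in> carrier G"
  shows "conj_mat (c \<otimes> t) = conj_mat t"
proof -
  have "c \<in> carrier G" using assms A_subset_carrier by blast
  then have "inv (c \<otimes> t) \<otimes> of_coord v \<otimes> (c \<otimes> t) = inv t \<otimes> of_coord v \<otimes> t" for v
    using conj_of_coord[of c v] conj_mat_A[OF assms(1)] assms(2) by (simp add: conj_mult_conj)
  then show ?thesis unfolding conj_mat_def by simp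
qed

lemma conj_mat_finite_order:
  assumes "h \<in> carrier G"
  shows "mat_apply (conj_mat h) ^^ index = id"
proof -
  have "(mat_apply (conj_mat h) ^^ n) v = mat_apply (conj_mat (h [^] n)) v" for n v
  proof (induction n arbitrary: v)
    case 0
    show ?case using conj_mat_A[OF subgroup.one_closed[OF subgroup_A]] by simp
  next
    case (Suc n)
    then show ?case using assms conj_mat_mult[of "h [^] n" h] by simp
  qed
  then show ?thesis using conj_mat_A[OF pow_index_in_A[OF assms]] by (simp add: fun_eq_iff)
qed

lemma finite_conj_mats: "finite (conj_mat ` carrier G)"
proof -
  obtain T where T: "finite T" "T \<subseteq> carrier G" "\<one> \<in> T"
    "\<And>g. g \<in> carrier G \<Longrightarrow> \<exists>a \<in> A. \<exists>t \<in> T. g = a \<otimes> t"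
    using transversal by metis
  have "conj_mat g \<in> conj_mat ` T" if g: "g \<in> carrier G" for g
  proof -
    obtain a t where at: "a \<in> A" "t \<in> T" "g = a \<otimes> t" using T(4)[OF g] by blast
    have "conj_mat g = conj_mat t" unfolding at(3) using at(2) T(2)
      by (intro conj_mat_coset[OF at(1)]) blast
    then show ?thesis using at(2) by (rule image_eqI)
  qed
  then have "conj_mat ` carrier G \<subseteq> conj_mat ` T" by blast
  then show ?thesis using finite_imageI[OF T(1)] by (rule finite_subset)
qed

lemma not_scalar_conj_mat:
  assumes "g \<in> carrier G"
    and "\<exists>a \<in> A. inv g \<otimes> a \<otimes> g \<noteq> a" "\<exists>a \<in> A. inv g \<otimes> a \<otimes> g \<noteq> inv a"
  shows "\<not> scalar_mat (conj_mat g)"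
proof
  assume "scalar_mat (conj_mat g)"
  then obtain l where l: "conj_mat g = (l, 0, 0, l)" unfolding scalar_mat_def by blast
  have "(mat_apply (conj_mat g) ^^ n) (1, 0) = (l ^ n, 0)" for n
    by (induction n) (simp_all add: l)
  moreover have "(mat_apply (conj_mat g) ^^ index) (1, 0) = (1, 0)"
    by (simp add: conj_mat_finite_order[OF assms(1)])
  ultimately have "l ^ index = 1" by simp
  then have "l = 1 \<or> l = -1" using int_eq_one_if_power_eq_one index_pos by simp
  moreover have "inv g \<otimes> a \<otimes> g = of_coord (l * fst (coord a), l * snd (coord a))" if "a \<in> A" for a
    using conj_of_coord[OF assms(1), of "coord a"] that by (simp add: l mat_apply_eq)
  moreover have "of_coord (- fst (coord a), - snd (coord a)) = inv a" if "a \<in> A" for a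
    using of_coord_uminus[of "coord a"] that by (simp add: uminus_prod_def)
  ultimately show False using assms(2,3) by auto
qed

text \<open>An automorphism need not map \<open>A\<close> to itself, but it maps \<open>index\<close>-th powers
  into \<open>A\<close>.\<close>
definition aut_mat :: "('a \<Rightarrow> 'a) \<Rightarrow> mat2" where
  "aut_mat f = mat_of (\<lambda>v. coord (f (of_coord v [^] index)))"

lemma aut_pow_index_in_A:
  assumes "f \<in> iso G G" "x \<in> carrier G"
  shows "f (x [^] index) \<in> A"
proof -
  interpret aut: group_hom G G f using group_hom_if_iso[OF assms(1)] .
  show ?thesis using assms(2) pow_index_in_A by (simp add: aut.hom_nat_pow)
qed

lemma aut_mat_apply:
  assumes "f \<in> iso G G"
  shows "mat_apply (aut_mat f) v = coord (f (of_coord v [^] index))"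
proof -
  interpret aut: group_hom G G f using group_hom_if_iso[OF assms] .
  have "additive (\<lambda>v. coord (f (of_coord v [^] index)))"
  proof
    fix v w
    have "of_coord (v + w) [^] index = of_coord v [^] index \<otimes> of_coord w [^] index"
      by (simp add: of_coord_nat_pow of_coord_add[symmetric] algebra_simps)
    then show "coord (f (of_coord (v + w) [^] index))
        = coord (f (of_coord v [^] index)) + coord (f (of_coord w [^] index))"
      by (simp add: coord_mult aut_pow_index_in_A[OF assms])
  qed
  then show ?thesis unfolding aut_mat_def by (rule mat_apply_mat_of)
qed

lemma of_coord_aut_mat_apply:
  assumes "f \<in> iso G G"
  shows "of_coord (mat_apply (aut_mat f) v) = f (of_coord v [^] index)"
  by (simp add: aut_mat_apply[OF assms] aut_pow_index_in_A[OF assms])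

lemma aut_mat_apply_coord:
  assumes "f \<in> iso G G" "a \<in> A" "f a \<in> A"
  shows "mat_apply (aut_mat f) (coord a)
           = (int index * fst (coord (f a)), int index * snd (coord (f a)))"
proof -
  interpret aut: group_hom G G f using group_hom_if_iso[OF assms(1)] .
  have "f (a [^] index) = of_coord (coord (f a)) [^] index"
    using assms(2,3) A_subset_carrier by (simp add: aut.hom_nat_pow subset_iff)
  then show ?thesis using assms(2) by (simp add: aut_mat_apply[OF assms(1)] of_coord_nat_pow)
qed

lemma aut_mat_intertwines:
  assumes "f \<in> iso G G" "g \<in> carrier G"
  shows "intertwines (aut_mat f) (conj_mat g) (conj_mat (f g))"
  unfolding intertwines_def
proof
  interpret aut: group_hom G G f using group_hom_if_iso[OF assms(1)] .
  fix v
  have "of_coord (mat_apply (aut_mat f) (mat_apply (conj_mat g) v))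
      = f (inv g \<otimes> of_coord v [^] index \<otimes> g)"
    using assms by (simp add: of_coord_aut_mat_apply conj_of_coord[symmetric] conj_nat_pow)
  also have "\<dots> = inv (f g) \<otimes> of_coord (mat_apply (aut_mat f) v) \<otimes> f g"
    using assms by (simp add: of_coord_aut_mat_apply)
  also have "\<dots> = of_coord (mat_apply (conj_mat (f g)) (mat_apply (aut_mat f) v))"
    using assms by (simp add: conj_of_coord)
  finally show "mat_apply (aut_mat f) (mat_apply (conj_mat g) v)
      = mat_apply (conj_mat (f g)) (mat_apply (aut_mat f) v)" by simp
qed

lemma aut_mat_inv_comp:
  assumes "f \<in> iso G G"
  shows "mat_apply (aut_mat (inv_into (carrier G) f)) (mat_apply (aut_mat f) v)
           = (int index * int index * fst v, int index * int index * snd v)"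
proof -
  interpret aut: group_hom G G f using group_hom_if_iso[OF assms] .
  have inv_iso: "inv_into (carrier G) f \<in> iso G G" using assms iso_set_sym by blast
  have inj: "inj_on f (carrier G)" using assms unfolding iso_def bij_betw_def by blast
  have "of_coord (mat_apply (aut_mat (inv_into (carrier G) f)) (mat_apply (aut_mat f) v))
      = inv_into (carrier G) f (f (of_coord v [^] index) [^] index)"
    by (simp add: of_coord_aut_mat_apply[OF inv_iso] of_coord_aut_mat_apply[OF assms])
  also have "\<dots> = (of_coord v [^] index) [^] index"
    using inj by (simp add: aut.hom_nat_pow[symmetric])
  also have "\<dots> = of_coord (int index * int index * fst v, int index * int index * snd v)"
    by (simp add: of_coord_nat_pow mult.assoc)
  finally show ?thesis by simp
qed

lemma det2_aut_mat:
  assumes "f \<in> iso G G"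
  shows "det2 (aut_mat f) \<noteq> 0" "\<bar>det2 (aut_mat f)\<bar> \<le> int index ^ 4"
proof -
  have prod: "det2 (aut_mat (inv_into (carrier G) f)) * det2 (aut_mat f) = int index ^ 4"
    using det2_mult_if_comp_scalar[OF aut_mat_inv_comp[OF assms]]
      by (simp add: power4_eq_xxxx mult.assoc)
  then show "det2 (aut_mat f) \<noteq> 0" using index_pos by auto
  have "\<bar>det2 (aut_mat f)\<bar> \<le> \<bar>det2 (aut_mat (inv_into (carrier G) f)) * det2 (aut_mat f)\<bar>"
    using prod index_pos
      abs_le_if_abs_mult_le[of "det2 (aut_mat f)" "det2 (aut_mat (inv_into (carrier G) f))"]
    by (simp add: mult.commute)
  then show "\<bar>det2 (aut_mat f)\<bar> \<le> int index ^ 4" using prod by simp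
qed

lemma bounded_aut_orbits_in_A:
  assumes "g \<in> carrier G" "\<not> scalar_mat (conj_mat g)"
  obtains D where "\<And>a. a \<in> A \<Longrightarrow> finite (aut_orbit G a \<inter> A) \<and> card (aut_orbit G a \<inter> A) \<le> D"
proof -
  have "elliptic_or_reflection (conj_mat g)"
    by (rule finite_order_elliptic_or_reflection[OF conj_mat_finite_order[OF assms(1)]
          index_pos assms(2)])
  define LL where "LL = {L. \<exists>M' \<in> conj_mat ` carrier G. intertwines L (conj_mat g) M'
                              \<and> det2 L \<noteq> 0 \<and> \<bar>det2 L\<bar> \<le> int index ^ 4}"
  have "finite LL"
    unfolding LL_def
      using finite_intertwiners[OF finite_conj_mats \<open>elliptic_or_reflection _\<close> assms(2)] .
  \<comment> \<open>\<open>f a\<close> is recovered from \<open>aut_mat f \<in> LL\<close> by dividing its value at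
    \<open>coord a\<close> by \<open>index\<close>\<close>
  define recover where
    "recover a L = of_coord (fst (mat_apply L (coord a)) div int index,
                             snd (mat_apply L (coord a)) div int index)"
    for a L
  have "aut_orbit G a \<inter> A \<subseteq> recover a ` LL" if a: "a \<in> A" for a
  proof
    fix b assume "b \<in> aut_orbit G a \<inter> A"
    then obtain f where f: "f \<in> iso G G" "b = f a" "b \<in> A" unfolding aut_orbit_def by blast
    have "aut_mat f \<in> LL"
      unfolding LL_def
        using aut_mat_intertwines[OF f(1) assms(1)] det2_aut_mat[OF f(1)] assms(1) f(1)
      by (auto simp: iso_def hom_def)
    moreover have "recover a (aut_mat f) = b"
      using aut_mat_apply_coord[OF f(1) a] f index_pos by (simp add: recover_def)
    ultimately show "b \<in> recover a ` LL" by blast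
  qed
  then show ?thesis
    using that[of "card LL"] \<open>finite LL\<close>
      by (meson card_image_le finite_imageI finite_subset card_mono order_trans)
qed

lemma aut_growth_lower:
  assumes "finite_generating_set G S"
    and D: "\<And>a. a \<in> A \<Longrightarrow> finite (aut_orbit G a \<inter> A) \<and> card (aut_orbit G a \<inter> A) \<le> D"
  shows "growth_le (\<lambda>n. n ^ 2) (aut_growth G S)"
proof -
  have S: "finite S" "S \<subseteq> carrier G" "generate G S = carrier G"
    using assms(1) unfolding finite_generating_set_def by auto
  obtain r1 where r1: "of_coord (1, 0) \<in> word_ball G S r1"
    using generate_subset_word_balls[OF S(2)] S(3) of_coord_closed by blast
  obtain r2 where r2: "of_coord (0, 1) \<in> word_ball G S r2"
    using generate_subset_word_balls[OF S(2)] S(3) of_coord_closed by blast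
  have r: "of_coord (1, 0) \<in> word_ball G S (r1 + r2)" "of_coord (0, 1) \<in> word_ball G S (r1 + r2)"
    using word_ball_mono[of r1 "r1 + r2"] word_ball_mono[of r2 "r1 + r2"] r1 r2 by auto
  define c where "c = 2 * (r1 + r2) + D + 1"
  have "n ^ 2 \<le> c * aut_growth G S (c * n + c) + c" for n
  proof -
    define B where "B = of_coord ` int_box (int n)"
    have "card B = card (int_box (int n))" unfolding B_def
      by (rule card_image) (simp add: inj_on_def)
    then have card_B: "card B = (2 * n + 1) ^ 2" by (simp only: card_int_box)
    have fin_B: "finite B" and B_A: "B \<subseteq> A" unfolding B_def by auto
    have "B \<subseteq> word_ball G S (c * n + c)"
    proof
      fix b assume "b \<in> B"
      then obtain v where v: "b = of_coord v" "v \<in> int_box (int n)" unfolding B_def by blast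
      have "b \<in> word_ball G S ((r1 + r2) * nat \<bar>fst v\<bar> + (r1 + r2) * nat \<bar>snd v\<bar>)"
        using word_ball_mult[OF S(2) word_ball_int_pow[OF S(2) r(1)]
            word_ball_int_pow[OF S(2) r(2)]]
        unfolding v(1) of_coord_basis_decomp[of v] .
      moreover have "nat \<bar>fst v\<bar> \<le> n" "nat \<bar>snd v\<bar> \<le> n" using v(2) by (auto simp: mem_int_box)
      then have "(r1 + r2) * nat \<bar>fst v\<bar> + (r1 + r2) * nat \<bar>snd v\<bar> \<le> (r1 + r2) * n + (r1 + r2) * n"
        by (intro add_mono mult_left_mono) simp_all
      moreover have "\<dots> \<le> c * n + c" unfolding c_def by (simp add: algebra_simps)
      ultimately show "b \<in> word_ball G S (c * n + c)" using word_ball_mono by blast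
    qed
    then have orbits: "card (aut_orbit G ` B) \<le> aut_growth G S (c * n + c)"
      unfolding aut_growth_def using finite_word_ball[OF S(1)] by (intro card_mono) auto
    have fibres: "card {b' \<in> B. aut_orbit G b' = aut_orbit G b} \<le> D" if "b \<in> B" for b
    proof -
      have sub: "{b' \<in> B. aut_orbit G b' = aut_orbit G b} \<subseteq> aut_orbit G b \<inter> A"
      proof
        fix b' assume "b' \<in> {b' \<in> B. aut_orbit G b' = aut_orbit G b}"
        then show "b' \<in> aut_orbit G b \<inter> A" using mem_aut_orbit_self[of b' G] B_A by auto
      qed
      have "b \<in> A" using that B_A by blast
      then have "finite (aut_orbit G b \<inter> A)" "card (aut_orbit G b \<inter> A) \<le> D" using D by blast+
      then show ?thesis using card_mono[OF _ sub] by linarith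
    qed
    have "card B \<le> D * card (aut_orbit G ` B)" using fibres
      by (rule card_le_mult_card_image[OF fin_B])
    also have "\<dots> \<le> c * aut_growth G S (c * n + c)"
      using orbits by (intro mult_le_mono) (simp_all add: c_def)
    finally have "card B \<le> c * aut_growth G S (c * n + c)" .
    moreover have "n ^ 2 \<le> card B" unfolding card_B by (rule power_mono) simp_all
    ultimately show ?thesis by linarith
  qed
  moreover have "c \<noteq> 0" unfolding c_def by simp
  ultimately show ?thesis unfolding growth_le_def by blast
qed

end

theorem mainTheorem10:
  fixes G :: "('a, 'b) monoid_scheme" and A :: "'a set"
  assumes "group G"
    and "A \<lhd> G"
    and "finite (rcosets\<^bsub>G\<^esub> A)"
    and "G\<lparr>carrier := A\<rparr> \<cong> DirProd integer_group integer_group"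
    and "\<exists>g \<in> carrier G. (\<exists>a \<in> A. inv\<^bsub>G\<^esub> g \<otimes>\<^bsub>G\<^esub> a \<otimes>\<^bsub>G\<^esub> g \<noteq> a)
                      \<and> (\<exists>a \<in> A. inv\<^bsub>G\<^esub> g \<otimes>\<^bsub>G\<^esub> a \<otimes>\<^bsub>G\<^esub> g \<noteq> inv\<^bsub>G\<^esub> a)"
  shows "quadratic_aut_growth G"
proof -
  obtain coord where "coord \<in> iso (G\<lparr>carrier := A\<rparr>) (integer_group \<times>\<times> integer_group)"
    using assms(4) unfolding is_iso_def by blast
  then interpret virtually_Z2 G A coord
    using assms(1-3) by (simp add: virtually_Z2_def virtually_Z2_axioms_def)
  obtain g where "g \<in> carrier G" "\<not> scalar_mat (conj_mat g)"
    using assms(5) not_scalar_conj_mat by blast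
  then obtain D where "\<And>a. a \<in> A \<Longrightarrow> finite (aut_orbit G a \<inter> A) \<and> card (aut_orbit G a \<inter> A) \<le> D"
    using bounded_aut_orbits_in_A by metis
  then show ?thesis
    unfolding quadratic_aut_growth_def growth_equiv_def
    using finitely_generated aut_growth_upper aut_growth_lower by blast
qed

end
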